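(* Let $G=(V,E)$ be a connected graph on $n\ge 2$ vertices with maximum degree $\Delta$. (i) $\gamma^{DLD}(G)\le n-\beta_2(G)\le \left\lfloor n\left(1-\frac{1}{\Delta^2+1}\right)\right\rfloor$. (ii) If moreover $N(u)\not\subseteq N(v)$ for all distinct $u,v\in V$, then $\gamma^{DLD}(G)\le n-\beta(G)\le \left\lfloor n\left(1-\frac{1}{\Delta+1}\right)\right\rfloor$. (iii) If moreover $N(u)\not\subseteq N[v]$ for all distinct $u,v\in V$, then $\gamma^{SLD}(G)\le n-\beta(G)\le \left\lfloor n\left(1-\frac{1}{\Delta+1}\right)\right\rfloor$.
   Context: Graphs are finite, simple and undirected. For $u\in V$, $N(u)$ is the set of neighbours of $u$ and $N[u]=N(u)\cup\{u\}$; $d(u,v)$ is the distance. A code is a non-empty subset $C\subseteq V$; $I(C;u)=N[u]\cap C$. A code $C$ is self-locating-dominating if for every $u\in V\setminus C$ we have $I(C;u)\neq\emptyset$ and $\bigcap_{c\in I(C;u)}N[c]=\{u\}$. A code $C$ is solid-locating-dominating if $I(C;u)\ne\emptyset$ for every $u\in V\setminus C$ and $I(C;u)\not\subseteq I(C;v)$ for all distinct $u,v\in V\setminus C$. $\gamma^{SLD}(G)$, $\gamma^{DLD}(G)$ are the minimum sizes of such codes. $\beta(G)$ is the independence number of $G$. $\beta_2(G)$ is the maximum size of a set $S\subseteq V$ with $d(u,v)\ge 3$ for all distinct $u,v\in S$. *)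

theory Defs
  imports Complex_Main
begin

definition graph :: "'a set \<Rightarrow> ('a \<Rightarrow> 'a \<Rightarrow> bool) \<Rightarrow> bool" where
  "graph V E \<longleftrightarrow> finite V \<and> (\<forall>u v. E u v \<longrightarrow> u \<in> V \<and> v \<in> V)
     \<and> (\<forall>u v. E u v \<longrightarrow> E v u) \<and> (\<forall>u. \<not> E u u)"

definition nbhd :: "'a set \<Rightarrow> ('a \<Rightarrow> 'a \<Rightarrow> bool) \<Rightarrow> 'a \<Rightarrow> 'a set" where
  "nbhd V E u = {v \<in> V. E u v}"

definition cnbhd :: "'a set \<Rightarrow> ('a \<Rightarrow> 'a \<Rightarrow> bool) \<Rightarrow> 'a \<Rightarrow> 'a set" where
  "cnbhd V E u = insert u (nbhd V E u)"

fun walk :: "'a set \<Rightarrow> ('a \<Rightarrow> 'a \<Rightarrow> bool) \<Rightarrow> nat \<Rightarrow> 'a \<Rightarrow> 'a \<Rightarrow> bool" where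
  "walk V E 0 u v = (u = v \<and> u \<in> V)"
| "walk V E (Suc k) u v = (\<exists>w\<in>V. E u w \<and> walk V E k w v)"

definition connected_graph :: "'a set \<Rightarrow> ('a \<Rightarrow> 'a \<Rightarrow> bool) \<Rightarrow> bool" where
  "connected_graph V E \<longleftrightarrow> (\<forall>u\<in>V. \<forall>v\<in>V. \<exists>k. walk V E k u v)"

definition gdist :: "'a set \<Rightarrow> ('a \<Rightarrow> 'a \<Rightarrow> bool) \<Rightarrow> 'a \<Rightarrow> 'a \<Rightarrow> nat" where
  "gdist V E u v = (LEAST k. walk V E k u v)"

definition max_degree :: "'a set \<Rightarrow> ('a \<Rightarrow> 'a \<Rightarrow> bool) \<Rightarrow> nat" where
  "max_degree V E = Max ((\<lambda>v. card (nbhd V E v)) ` V)"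

definition I_code :: "'a set \<Rightarrow> ('a \<Rightarrow> 'a \<Rightarrow> bool) \<Rightarrow> 'a set \<Rightarrow> 'a \<Rightarrow> 'a set" where
  "I_code V E C u = cnbhd V E u \<inter> C"

definition code :: "'a set \<Rightarrow> 'a set \<Rightarrow> bool" where
  "code V C \<longleftrightarrow> C \<subseteq> V \<and> C \<noteq> {}"

definition self_LD :: "'a set \<Rightarrow> ('a \<Rightarrow> 'a \<Rightarrow> bool) \<Rightarrow> 'a set \<Rightarrow> bool" where
  "self_LD V E C \<longleftrightarrow> code V C \<and>
     (\<forall>u\<in>V - C. I_code V E C u \<noteq> {} \<and> (\<Inter>c\<in>I_code V E C u. cnbhd V E c) = {u})"

definition solid_LD :: "'a set \<Rightarrow> ('a \<Rightarrow> 'a \<Rightarrow> bool) \<Rightarrow> 'a set \<Rightarrow> bool" where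
  "solid_LD V E C \<longleftrightarrow> code V C \<and>
     (\<forall>u\<in>V - C. I_code V E C u \<noteq> {}) \<and>
     (\<forall>u\<in>V - C. \<forall>v\<in>V - C. u \<noteq> v \<longrightarrow> \<not> (I_code V E C u \<subseteq> I_code V E C v))"

definition gamma_SLD :: "'a set \<Rightarrow> ('a \<Rightarrow> 'a \<Rightarrow> bool) \<Rightarrow> nat" where
  "gamma_SLD V E = Min (card ` {C. self_LD V E C})"

definition gamma_DLD :: "'a set \<Rightarrow> ('a \<Rightarrow> 'a \<Rightarrow> bool) \<Rightarrow> nat" where
  "gamma_DLD V E = Min (card ` {C. solid_LD V E C})"

definition beta :: "'a set \<Rightarrow> ('a \<Rightarrow> 'a \<Rightarrow> bool) \<Rightarrow> nat" where
  "beta V E = Max (card ` {S. S \<subseteq> V \<and> (\<forall>u\<in>S. \<forall>v\<in>S. \<not> E u v)})"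

definition beta2 :: "'a set \<Rightarrow> ('a \<Rightarrow> 'a \<Rightarrow> bool) \<Rightarrow> nat" where
  "beta2 V E = Max (card ` {S. S \<subseteq> V \<and>
      (\<forall>u\<in>S. \<forall>v\<in>S. u \<noteq> v \<longrightarrow> gdist V E u v \<ge> 3)})"

end

theory Submission
  imports Defs
begin

text \<open>Removing from V a maximum independent set S leaves a code C = V - S in which
every u \<in> S is identified by its whole open neighbourhood, I(C; u) = N(u). The neighbourhood
hypotheses of (ii) and (iii) then say exactly that C is solid- resp. self-locating-dominating.
For (i) take S to be a maximum 2-packing instead: the neighbourhoods of its vertices are pairwise
disjoint, so C is solid-locating-dominating without further hypotheses. The upper bounds come from
maximality: the closed neighbourhoods (resp. balls of radius 2) around a maximal independent set
(resp. 2-packing) cover V and have at most \<Delta> + 1 (resp. \<Delta>^2 + 1) vertices, so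
n \<le> |S| (\<Delta> + 1) (resp. n \<le> |S| (\<Delta>^2 + 1)).\<close>

definition independent_set :: "'a set \<Rightarrow> ('a \<Rightarrow> 'a \<Rightarrow> bool) \<Rightarrow> 'a set \<Rightarrow> bool" where
  "independent_set V E S \<longleftrightarrow> S \<subseteq> V \<and> (\<forall>u\<in>S. \<forall>v\<in>S. \<not> E u v)"

definition ball2 :: "'a set \<Rightarrow> ('a \<Rightarrow> 'a \<Rightarrow> bool) \<Rightarrow> 'a \<Rightarrow> 'a set" where
  "ball2 V E u = {v \<in> V. v = u \<or> E u v \<or> (\<exists>w. E u w \<and> E w v)}"

definition two_packing :: "'a set \<Rightarrow> ('a \<Rightarrow> 'a \<Rightarrow> bool) \<Rightarrow> 'a set \<Rightarrow> bool" where
  "two_packing V E S \<longleftrightarrow> S \<subseteq> V \<and> (\<forall>u\<in>S. \<forall>v\<in>S. u \<noteq> v \<longrightarrow> v \<notin> ball2 V E u)"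

lemma Min_card_le:
  assumes "finite V" "\<And>C. P C \<Longrightarrow> C \<subseteq> V" "P C"
  shows "Min (card ` Collect P) \<le> card C"
proof -
  have "finite (Collect P)"
    using assms(1,2) finite_subset[of "Collect P" "Pow V"] by blast
  then show ?thesis using assms(3) by (intro Min_le) auto
qed

lemma obtain_Max_card_maximal:
  assumes "finite V" "\<And>S. P S \<Longrightarrow> S \<subseteq> V" "P {}"
  obtains S where "P S" "card S = Max (card ` Collect P)" "\<And>v. v \<in> V - S \<Longrightarrow> \<not> P (insert v S)"
proof -
  have fin: "finite (Collect P)"
    using assms(1,2) finite_subset[of "Collect P" "Pow V"] by blast
  then have "Max (card ` Collect P) \<in> card ` Collect P"
    using assms(3) by (intro Max_in) auto
  then obtain S where S: "P S" "card S = Max (card ` Collect P)" by auto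
  have "\<not> P (insert v S)" if "v \<in> V - S" for v
  proof
    assume "P (insert v S)"
    then have "card (insert v S) \<le> card S" using S(2) fin by (simp add: Max_ge)
    moreover have "finite S" using S(1) assms(1,2) finite_subset by blast
    ultimately show False using that by simp
  qed
  then show ?thesis using that S by blast
qed

lemma card_le_mult_of_cover:
  assumes "finite S" "V \<subseteq> (\<Union>s\<in>S. B s)" "\<And>s. s \<in> S \<Longrightarrow> finite (B s) \<and> card (B s) \<le> m"
  shows "card V \<le> card S * m"
proof -
  have "card V \<le> card (\<Union>s\<in>S. B s)" using assms by (intro card_mono) auto
  also have "\<dots> \<le> (\<Sum>s\<in>S. card (B s))" using assms(1) by (rule card_UN_le)
  also have "\<dots> \<le> card S * m" using assms(3) sum_bounded_above[of S "\<lambda>s. card (B s)" m] by auto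
  finally show ?thesis .
qed

lemma diff_le_floor_of_le_mult:
  fixes n b m :: nat
  assumes "n \<le> b * m" "b \<le> n"
  shows "int (n - b) \<le> \<lfloor>real n * (1 - 1 / real m)\<rfloor>"
proof (cases "m = 0")
  case False
  have "real n \<le> real b * real m" using assms(1) of_nat_mono by fastforce
  then have "real n / real m \<le> real b" using False by (simp add: divide_le_eq)
  then have "real (n - b) \<le> real n * (1 - 1 / real m)"
    using assms(2) by (simp add: of_nat_diff right_diff_distrib)
  then show ?thesis by (simp add: le_floor_iff)
qed (use assms in simp)

lemma graph_sym: "graph V E \<Longrightarrow> E u v \<Longrightarrow> E v u"
  unfolding graph_def by simp

lemma graph_vertices: "graph V E \<Longrightarrow> E u v \<Longrightarrow> u \<in> V \<and> v \<in> V"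
  unfolding graph_def by simp

lemma graph_irrefl: "graph V E \<Longrightarrow> \<not> E u u"
  unfolding graph_def by simp

lemma graph_finite: "graph V E \<Longrightarrow> finite V"
  unfolding graph_def by simp

lemma mem_nbhd_iff: "graph V E \<Longrightarrow> v \<in> nbhd V E u \<longleftrightarrow> E u v"
  unfolding nbhd_def by (auto dest: graph_vertices)

lemma mem_cnbhd_iff: "graph V E \<Longrightarrow> v \<in> cnbhd V E u \<longleftrightarrow> v = u \<or> E u v"
  unfolding cnbhd_def by (auto simp: mem_nbhd_iff)

lemma card_nbhd_le_max_degree: "graph V E \<Longrightarrow> v \<in> V \<Longrightarrow> card (nbhd V E v) \<le> max_degree V E"
  unfolding max_degree_def by (auto intro: Max_ge dest: graph_finite)

lemma card_cnbhd: "graph V E \<Longrightarrow> card (cnbhd V E v) = card (nbhd V E v) + 1"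
  unfolding cnbhd_def nbhd_def using graph_irrefl graph_finite by fastforce

lemma card_cnbhd_Diff_neighbour:
  assumes G: "graph V E" and "E u c"
  shows "card (cnbhd V E c - {u}) \<le> max_degree V E"
proof -
  have "c \<in> V" "u \<in> cnbhd V E c"
    using assms by (auto simp: mem_cnbhd_iff dest: graph_vertices graph_sym)
  moreover have "finite (cnbhd V E c)"
    using G by (auto simp: cnbhd_def nbhd_def dest: graph_finite)
  ultimately show ?thesis
    using card_nbhd_le_max_degree[OF G] by (simp add: card_cnbhd[OF G])
qed

lemma card_ball2_le:
  assumes G: "graph V E" and u: "u \<in> V"
  shows "card (ball2 V E u) \<le> max_degree V E ^ 2 + 1"
proof -
  let ?\<Delta> = "max_degree V E"
  let ?R = "\<Union>c\<in>nbhd V E u. cnbhd V E c - {u}"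
  have fin: "finite ?R"
    using G by (auto simp: nbhd_def cnbhd_def dest: graph_finite)
  have "ball2 V E u \<subseteq> insert u ?R"
    unfolding ball2_def using G by (auto simp: mem_nbhd_iff mem_cnbhd_iff)
  then have "card (ball2 V E u) \<le> card (insert u ?R)"
    using fin by (intro card_mono) auto
  also have "\<dots> \<le> card ?R + 1"
    by (simp only: card_insert_if[OF fin] split: if_split) simp
  also have "card ?R \<le> card (nbhd V E u) * ?\<Delta>"
    using G card_cnbhd_Diff_neighbour[OF G]
    by (intro card_le_mult_of_cover[where B = "\<lambda>c. cnbhd V E c - {u}"])
      (auto simp: mem_nbhd_iff cnbhd_def nbhd_def dest: graph_finite)
  also have "\<dots> \<le> ?\<Delta> * ?\<Delta>"
    using card_nbhd_le_max_degree[OF G u] by simp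
  finally show ?thesis by (simp add: power2_eq_square)
qed

lemma ex_walk_less_3_iff:
  assumes G: "graph V E" and "u \<in> V" "v \<in> V"
  shows "(\<exists>k<3. walk V E k u v) \<longleftrightarrow> v \<in> ball2 V E u"
proof -
  have "(\<exists>k<3. P k) \<longleftrightarrow> P 0 \<or> P 1 \<or> P (2::nat)" for P
    by (auto simp: less_Suc_eq numeral_3_eq_3 numeral_2_eq_2)
  then have "(\<exists>k<3. walk V E k u v) \<longleftrightarrow> walk V E 0 u v \<or> walk V E 1 u v \<or> walk V E 2 u v" .
  also have "\<dots> \<longleftrightarrow> v = u \<or> E u v \<or> (\<exists>w. E u w \<and> E w v)"
    using assms graph_vertices[OF G] by (auto simp: numeral_2_eq_2)
  finally show ?thesis using assms(3) unfolding ball2_def by blast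
qed

lemma gdist_less_3_iff:
  assumes G: "graph V E" and conn: "connected_graph V E" and u: "u \<in> V" and v: "v \<in> V"
  shows "gdist V E u v < 3 \<longleftrightarrow> v \<in> ball2 V E u"
proof -
  have "\<exists>k. walk V E k u v" using conn u v unfolding connected_graph_def by blast
  then have "walk V E (gdist V E u v) u v" unfolding gdist_def by (rule LeastI_ex)
  moreover have "gdist V E u v \<le> k" if "walk V E k u v" for k
    unfolding gdist_def using that by (rule Least_le)
  ultimately have "gdist V E u v < 3 \<longleftrightarrow> (\<exists>k<3. walk V E k u v)"
    using le_less_trans by blast
  then show ?thesis using ex_walk_less_3_iff[OF G u v] by simp
qed

lemma beta2_eq_Max_two_packing:
  assumes "graph V E" "connected_graph V E"
  shows "beta2 V E = Max (card ` Collect (two_packing V E))"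
proof -
  have "(S \<subseteq> V \<and> (\<forall>u\<in>S. \<forall>v\<in>S. u \<noteq> v \<longrightarrow> 3 \<le> gdist V E u v)) \<longleftrightarrow> two_packing V E S"
    for S
    unfolding two_packing_def using gdist_less_3_iff[OF assms] by (meson not_less subsetD)
  then show ?thesis unfolding beta2_def by simp
qed

lemma two_packing_independent:
  assumes G: "graph V E" and S: "two_packing V E S"
  shows "independent_set V E S"
  unfolding independent_set_def
proof (intro conjI ballI notI)
  show "S \<subseteq> V" using S unfolding two_packing_def by blast
next
  fix u v assume "u \<in> S" "v \<in> S" "E u v"
  moreover have "u \<noteq> v" using \<open>E u v\<close> graph_irrefl[OF G] by blast
  ultimately show False
    using S graph_vertices[OF G] unfolding two_packing_def ball2_def by blast
qed

lemma two_packing_nbhd_disjoint: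
  assumes "graph V E" "two_packing V E S" "u \<in> S" "v \<in> S" "u \<noteq> v"
  shows "nbhd V E u \<inter> nbhd V E v = {}"
proof -
  have "v \<notin> ball2 V E u" using assms(2-5) unfolding two_packing_def by blast
  then show ?thesis
    using assms(2,4) graph_sym[OF assms(1)]
    unfolding two_packing_def ball2_def by (auto simp: mem_nbhd_iff[OF assms(1)])
qed

subsection \<open>Complements of independent sets as locating codes\<close>

lemma nbhd_nonempty_if_connected:
  assumes G: "graph V E" and conn: "connected_graph V E" and n2: "2 \<le> card V" and u: "u \<in> V"
  shows "nbhd V E u \<noteq> {}"
proof -
  have "\<not> V \<subseteq> {u}" using n2 card_mono[of "{u}" V] by auto
  then obtain v where v: "v \<in> V" "v \<noteq> u" by blast
  then obtain k where "walk V E k u v" using conn u unfolding connected_graph_def by blast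
  then show ?thesis using v by (cases k) (auto simp: nbhd_def)
qed

lemma I_code_Diff_independent:
  assumes G: "graph V E" and S: "independent_set V E S" and u: "u \<in> S"
  shows "I_code V E (V - S) u = nbhd V E u"
  using assms unfolding I_code_def cnbhd_def independent_set_def nbhd_def by auto

lemma Diff_independent_nonempty:
  assumes G: "graph V E" and "V \<noteq> {}" and no_isolated: "\<forall>u\<in>V. nbhd V E u \<noteq> {}"
    and S: "independent_set V E S"
  shows "V - S \<noteq> {}"
proof
  assume "V - S = {}"
  then have "V \<subseteq> S" by blast
  obtain u w where "u \<in> V" "w \<in> nbhd V E u" using assms(2) no_isolated by blast
  then show False using \<open>V \<subseteq> S\<close> S unfolding independent_set_def nbhd_def by blast
qed

lemma solid_LD_Diff_independent:
  assumes G: "graph V E" and "V \<noteq> {}" and no_isolated: "\<forall>u\<in>V. nbhd V E u \<noteq> {}"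
    and S: "independent_set V E S"
    and separated: "\<forall>u\<in>S. \<forall>v\<in>S. u \<noteq> v \<longrightarrow> \<not> nbhd V E u \<subseteq> nbhd V E v"
  shows "solid_LD V E (V - S)"
proof -
  have "S \<subseteq> V" using S unfolding independent_set_def by blast
  then have "V - (V - S) = S" by blast
  then show ?thesis
    unfolding solid_LD_def code_def
    using Diff_independent_nonempty[OF assms(1-4)] no_isolated separated \<open>S \<subseteq> V\<close>
    by (auto simp: I_code_Diff_independent[OF G S])
qed

lemma self_LD_Diff_independent:
  assumes G: "graph V E" and "V \<noteq> {}" and no_isolated: "\<forall>u\<in>V. nbhd V E u \<noteq> {}"
    and S: "independent_set V E S"
    and separated: "\<forall>u\<in>S. \<forall>v\<in>V. u \<noteq> v \<longrightarrow> \<not> nbhd V E u \<subseteq> cnbhd V E v"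
  shows "self_LD V E (V - S)"
proof -
  have SV: "S \<subseteq> V" using S unfolding independent_set_def by blast
  have "(\<Inter>c\<in>nbhd V E u. cnbhd V E c) = {u}" if u: "u \<in> S" for u
  proof (intro equalityI subsetI)
    fix w assume w: "w \<in> (\<Inter>c\<in>nbhd V E u. cnbhd V E c)"
    obtain c where "c \<in> nbhd V E u" using no_isolated u SV by blast
    then have "w \<in> V" using w by (auto simp: cnbhd_def nbhd_def)
    moreover have "nbhd V E u \<subseteq> cnbhd V E w"
      using w graph_sym[OF G] by (auto simp: mem_nbhd_iff[OF G] mem_cnbhd_iff[OF G])
    ultimately show "w \<in> {u}" using separated u by (metis singletonI)
  next
    fix w assume "w \<in> {u}"
    then show "w \<in> (\<Inter>c\<in>nbhd V E u. cnbhd V E c)"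
      using graph_sym[OF G] by (auto simp: mem_nbhd_iff[OF G] mem_cnbhd_iff[OF G])
  qed
  moreover have "V - (V - S) = S" using SV by blast
  ultimately show ?thesis
    unfolding self_LD_def code_def
    using Diff_independent_nonempty[OF assms(1-4)] no_isolated SV
    by (auto simp: I_code_Diff_independent[OF G S])
qed

lemma solid_LD_Diff_two_packing:
  assumes G: "graph V E" and "V \<noteq> {}" and no_isolated: "\<forall>u\<in>V. nbhd V E u \<noteq> {}"
    and S: "two_packing V E S"
  shows "solid_LD V E (V - S)"
proof (rule solid_LD_Diff_independent[OF assms(1-3) two_packing_independent[OF G S]])
  have "S \<subseteq> V" using S unfolding two_packing_def by blast
  then show "\<forall>u\<in>S. \<forall>v\<in>S. u \<noteq> v \<longrightarrow> \<not> nbhd V E u \<subseteq> nbhd V E v"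
    using no_isolated two_packing_nbhd_disjoint[OF G S] by blast
qed

subsection \<open>Maximum independent sets and 2-packings cover the graph\<close>

lemma mem_ball2_sym:
  assumes G: "graph V E" and "u \<in> V" "v \<in> V"
  shows "v \<in> ball2 V E u \<longleftrightarrow> u \<in> ball2 V E v"
  using assms graph_sym[OF G] unfolding ball2_def by blast

lemma independent_set_maximal_cover:
  assumes G: "graph V E" and S: "independent_set V E S"
    and maximal: "\<And>v. v \<in> V - S \<Longrightarrow> \<not> independent_set V E (insert v S)"
  shows "V \<subseteq> (\<Union>s\<in>S. cnbhd V E s)"
proof
  fix v assume v: "v \<in> V"
  show "v \<in> (\<Union>s\<in>S. cnbhd V E s)"
  proof (cases "v \<in> S")
    case True
    then show ?thesis unfolding cnbhd_def by blast
  next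
    case False
    then obtain s where "s \<in> S" "E v s \<or> E s v"
      using maximal[of v] v S graph_irrefl[OF G] unfolding independent_set_def by blast
    then show ?thesis using graph_sym[OF G] by (auto simp: mem_cnbhd_iff[OF G])
  qed
qed

lemma two_packing_maximal_cover:
  assumes G: "graph V E" and S: "two_packing V E S"
    and maximal: "\<And>v. v \<in> V - S \<Longrightarrow> \<not> two_packing V E (insert v S)"
  shows "V \<subseteq> (\<Union>s\<in>S. ball2 V E s)"
proof
  fix v assume v: "v \<in> V"
  have "S \<subseteq> V" using S unfolding two_packing_def by blast
  show "v \<in> (\<Union>s\<in>S. ball2 V E s)"
  proof (cases "v \<in> S")
    case True
    then show ?thesis using v unfolding ball2_def by blast
  next
    case False
    then obtain s where "s \<in> S" "v \<in> ball2 V E s \<or> s \<in> ball2 V E v"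
      using maximal[of v] v S unfolding two_packing_def by blast
    then show ?thesis using mem_ball2_sym[OF G] v \<open>S \<subseteq> V\<close> by blast
  qed
qed

lemma obtain_maximum_independent_set:
  assumes G: "graph V E"
  obtains S where "independent_set V E S" "card S = beta V E" "V \<subseteq> (\<Union>s\<in>S. cnbhd V E s)"
proof -
  have "beta V E = Max (card ` Collect (independent_set V E))"
    unfolding beta_def independent_set_def by simp
  moreover have "independent_set V E {}" unfolding independent_set_def by blast
  moreover have "independent_set V E S \<Longrightarrow> S \<subseteq> V" for S
    unfolding independent_set_def by blast
  ultimately obtain S where "independent_set V E S" "card S = beta V E"
    "\<And>v. v \<in> V - S \<Longrightarrow> \<not> independent_set V E (insert v S)"
    using obtain_Max_card_maximal[OF graph_finite[OF G]] by metis
  then show ?thesis using that independent_set_maximal_cover[OF G] by blast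
qed

lemma obtain_maximum_two_packing:
  assumes G: "graph V E" and conn: "connected_graph V E"
  obtains S where "two_packing V E S" "card S = beta2 V E" "V \<subseteq> (\<Union>s\<in>S. ball2 V E s)"
proof -
  have "two_packing V E {}" unfolding two_packing_def by blast
  moreover have "two_packing V E S \<Longrightarrow> S \<subseteq> V" for S
    unfolding two_packing_def by blast
  ultimately obtain S where "two_packing V E S" "card S = beta2 V E"
    "\<And>v. v \<in> V - S \<Longrightarrow> \<not> two_packing V E (insert v S)"
    using obtain_Max_card_maximal[OF graph_finite[OF G]] beta2_eq_Max_two_packing[OF G conn]
    by metis
  then show ?thesis using that two_packing_maximal_cover[OF G] by blast
qed

lemma card_Diff_le_floor_of_cover:
  assumes "finite V" "S \<subseteq> V" "V \<subseteq> (\<Union>s\<in>S. B s)" "\<And>s. s \<in> S \<Longrightarrow> finite (B s) \<and> card (B s) \<le> m"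
  shows "int (card V - card S) \<le> \<lfloor>real (card V) * (1 - 1 / real m)\<rfloor>"
proof (rule diff_le_floor_of_le_mult)
  show "card V \<le> card S * m"
    using assms by (intro card_le_mult_of_cover[where B = B]) (auto dest: finite_subset)
  show "card S \<le> card V" using assms(1,2) by (rule card_mono)
qed

lemma gamma_DLD_le_card: "graph V E \<Longrightarrow> solid_LD V E C \<Longrightarrow> gamma_DLD V E \<le> card C"
  unfolding gamma_DLD_def by (rule Min_card_le[OF graph_finite]) (auto simp: solid_LD_def code_def)

lemma gamma_SLD_le_card: "graph V E \<Longrightarrow> self_LD V E C \<Longrightarrow> gamma_SLD V E \<le> card C"
  unfolding gamma_SLD_def by (rule Min_card_le[OF graph_finite]) (auto simp: self_LD_def code_def)

lemma card_Diff_beta2_le_floor: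
  assumes G: "graph V E" and conn: "connected_graph V E"
  shows "int (card V - beta2 V E) \<le> \<lfloor>real (card V) * (1 - 1 / (real (max_degree V E) ^ 2 + 1))\<rfloor>"
proof -
  obtain P where P: "two_packing V E P" "card P = beta2 V E" "V \<subseteq> (\<Union>s\<in>P. ball2 V E s)"
    using obtain_maximum_two_packing[OF G conn] .
  have "P \<subseteq> V" using P(1) unfolding two_packing_def by blast
  have "int (card V - card P) \<le> \<lfloor>real (card V) * (1 - 1 / real (max_degree V E ^ 2 + 1))\<rfloor>"
    by (rule card_Diff_le_floor_of_cover[OF graph_finite[OF G] \<open>P \<subseteq> V\<close> P(3)])
      (use card_ball2_le[OF G] \<open>P \<subseteq> V\<close> graph_finite[OF G] in \<open>auto simp: ball2_def\<close>)
  then show ?thesis using P(2) by (simp add: add.commute)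
qed

lemma card_Diff_beta_le_floor:
  assumes G: "graph V E"
  shows "int (card V - beta V E) \<le> \<lfloor>real (card V) * (1 - 1 / (real (max_degree V E) + 1))\<rfloor>"
proof -
  obtain S where S: "independent_set V E S" "card S = beta V E" "V \<subseteq> (\<Union>s\<in>S. cnbhd V E s)"
    using obtain_maximum_independent_set[OF G] .
  have "S \<subseteq> V" using S(1) unfolding independent_set_def by blast
  have "int (card V - card S) \<le> \<lfloor>real (card V) * (1 - 1 / real (max_degree V E + 1))\<rfloor>"
    by (rule card_Diff_le_floor_of_cover[OF graph_finite[OF G] \<open>S \<subseteq> V\<close> S(3)])
      (use card_cnbhd[OF G] card_nbhd_le_max_degree[OF G] \<open>S \<subseteq> V\<close> graph_finite[OF G]
        in \<open>auto simp: cnbhd_def nbhd_def\<close>)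
  then show ?thesis using S(2) by (simp add: add.commute)
qed

lemma gamma_DLD_le_card_Diff_beta2:
  assumes G: "graph V E" and conn: "connected_graph V E" and n2: "2 \<le> card V"
  shows "gamma_DLD V E \<le> card V - beta2 V E"
proof -
  obtain P where P: "two_packing V E P" "card P = beta2 V E"
    using obtain_maximum_two_packing[OF G conn] by blast
  have "V \<noteq> {}" using n2 by auto
  moreover have "\<forall>u\<in>V. nbhd V E u \<noteq> {}" using nbhd_nonempty_if_connected[OF G conn n2] by blast
  ultimately have "gamma_DLD V E \<le> card (V - P)"
    using gamma_DLD_le_card[OF G solid_LD_Diff_two_packing[OF G _ _ P(1)]] by blast
  moreover have "P \<subseteq> V" using P(1) unfolding two_packing_def by blast
  ultimately show ?thesis using P(2) graph_finite[OF G] by (simp add: card_Diff_subset finite_subset)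
qed

lemma gamma_DLD_le_card_Diff_beta:
  assumes G: "graph V E" and conn: "connected_graph V E" and n2: "2 \<le> card V"
    and separated: "\<forall>u\<in>V. \<forall>v\<in>V. u \<noteq> v \<longrightarrow> \<not> nbhd V E u \<subseteq> nbhd V E v"
  shows "gamma_DLD V E \<le> card V - beta V E"
proof -
  obtain S where S: "independent_set V E S" "card S = beta V E"
    using obtain_maximum_independent_set[OF G] by blast
  have "S \<subseteq> V" using S(1) unfolding independent_set_def by blast
  have "V \<noteq> {}" using n2 by auto
  moreover have "\<forall>u\<in>V. nbhd V E u \<noteq> {}" using nbhd_nonempty_if_connected[OF G conn n2] by blast
  ultimately have "gamma_DLD V E \<le> card (V - S)"
    using gamma_DLD_le_card[OF G solid_LD_Diff_independent[OF G _ _ S(1)]] separated \<open>S \<subseteq> V\<close>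
    by blast
  then show ?thesis using S(2) \<open>S \<subseteq> V\<close> graph_finite[OF G] by (simp add: card_Diff_subset finite_subset)
qed

lemma gamma_SLD_le_card_Diff_beta:
  assumes G: "graph V E" and conn: "connected_graph V E" and n2: "2 \<le> card V"
    and separated: "\<forall>u\<in>V. \<forall>v\<in>V. u \<noteq> v \<longrightarrow> \<not> nbhd V E u \<subseteq> cnbhd V E v"
  shows "gamma_SLD V E \<le> card V - beta V E"
proof -
  obtain S where S: "independent_set V E S" "card S = beta V E"
    using obtain_maximum_independent_set[OF G] by blast
  have "S \<subseteq> V" using S(1) unfolding independent_set_def by blast
  have "V \<noteq> {}" using n2 by auto
  moreover have "\<forall>u\<in>V. nbhd V E u \<noteq> {}" using nbhd_nonempty_if_connected[OF G conn n2] by blast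
  ultimately have "gamma_SLD V E \<le> card (V - S)"
    using gamma_SLD_le_card[OF G self_LD_Diff_independent[OF G _ _ S(1)]] separated \<open>S \<subseteq> V\<close>
    by blast
  then show ?thesis using S(2) \<open>S \<subseteq> V\<close> graph_finite[OF G] by (simp add: card_Diff_subset finite_subset)
qed

theorem mainTheorem8:
  fixes V :: "'a set" and E :: "'a \<Rightarrow> 'a \<Rightarrow> bool"
  assumes G: "graph V E"
    and conn: "connected_graph V E"
    and n2: "card V \<ge> 2"
  defines "n \<equiv> card V" and "\<Delta> \<equiv> max_degree V E"
  shows "(gamma_DLD V E \<le> n - beta2 V E \<and>
          int (n - beta2 V E) \<le> \<lfloor>real n * (1 - 1 / (real \<Delta> ^ 2 + 1))\<rfloor>)
       \<and> ((\<forall>u\<in>V. \<forall>v\<in>V. u \<noteq> v \<longrightarrow> \<not> nbhd V E u \<subseteq> nbhd V E v) \<longrightarrow>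
          gamma_DLD V E \<le> n - beta V E \<and>
          int (n - beta V E) \<le> \<lfloor>real n * (1 - 1 / (real \<Delta> + 1))\<rfloor>)
       \<and> ((\<forall>u\<in>V. \<forall>v\<in>V. u \<noteq> v \<longrightarrow> \<not> nbhd V E u \<subseteq> cnbhd V E v) \<longrightarrow>
          gamma_SLD V E \<le> n - beta V E \<and>
          int (n - beta V E) \<le> \<lfloor>real n * (1 - 1 / (real \<Delta> + 1))\<rfloor>)"
  unfolding n_def \<Delta>_def
  using gamma_DLD_le_card_Diff_beta2[OF G conn n2] card_Diff_beta2_le_floor[OF G conn]
    gamma_DLD_le_card_Diff_beta[OF G conn n2] gamma_SLD_le_card_Diff_beta[OF G conn n2]
    card_Diff_beta_le_floor[OF G]
  by blast

end
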